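(* Let $B$ be a unital commutative semi-simple Banach algebra with connected maximal ideal space $X$. Let $T$ be a unital endomorphism of $B$ which is a Riesz operator, induced by a selfmap $\phi$ of $X$, and suppose $\{x_0\}=\bigcap_{n=0}^\infty\phi_n(X)$. If $B$ has no non-zero point derivations at $x_0$, then there is a positive integer $N$ such that $T^Nf=\hat f(x_0)1$ for all $f\in B$.
   Context: The maximal ideal space $X$ of $B$ carries the weak-* (Gelfand) topology, and $\hat f$ denotes the Gelfand transform of $f\in B$. A unital endomorphism $T$ of $B$ is induced by a weak-* continuous selfmap $\phi$ of $X$ if $\widehat{Tf}(x)=\hat f(\phi(x))$ for all $f\in B$, $x\in X$; $\phi_n$ is the $n$-th iterate of $\phi$ ($\phi_0$ the identity). A point derivation at $x_0$ is a linear functional $D$ on $B$ with $D(fg)=\hat f(x_0)D(g)+\hat g(x_0)D(f)$. A bounded operator $T$ is a Riesz operator if $\lim_{n}\left[\inf\{\|T^n-K\|:K \text{ compact}\}\right]^{1/n}=0$. *)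

theory Defs
  imports "HOL-Analysis.Analysis"
begin

text \<open>A unital commutative complex Banach algebra is encoded as a type of class
  comm_ring_1, real_normed_algebra_1, banach together with a unital ring embedding
  iota of the complex scalars, compatible with the real structure and the norm;
  complex scalar multiplication c.x is iota c * x.\<close>

definition cplx_banach_alg :: "(complex \<Rightarrow> 'a::{comm_ring_1,real_normed_algebra_1,banach}) \<Rightarrow> bool" where
  "cplx_banach_alg \<iota> \<longleftrightarrow>
     (\<forall>c d. \<iota> (c + d) = \<iota> c + \<iota> d) \<and> (\<forall>c d. \<iota> (c * d) = \<iota> c * \<iota> d) \<and> \<iota> 1 = 1 \<and>
     (\<forall>r. \<iota> (complex_of_real r) = of_real r) \<and>
     (\<forall>c x. norm (\<iota> c * x) = cmod c * norm x)"

definition clinear_map :: "(complex \<Rightarrow> 'a::{comm_ring_1,real_normed_algebra_1,banach}) \<Rightarrow> ('a \<Rightarrow> 'a) \<Rightarrow> bool" where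
  "clinear_map \<iota> T \<longleftrightarrow> (\<forall>x y. T (x + y) = T x + T y) \<and> (\<forall>c x. T (\<iota> c * x) = \<iota> c * T x)"

definition clinear_functional :: "(complex \<Rightarrow> 'a::{comm_ring_1,real_normed_algebra_1,banach}) \<Rightarrow> ('a \<Rightarrow> complex) \<Rightarrow> bool" where
  "clinear_functional \<iota> D \<longleftrightarrow> (\<forall>x y. D (x + y) = D x + D y) \<and> (\<forall>c x. D (\<iota> c * x) = c * D x)"

text \<open>Maximal ideal space: nonzero multiplicative linear functionals (characters).
  It is a subset of the function type 'a => complex, whose topology (Function_Topology)
  is the product topology, i.e. pointwise convergence; the subspace topology is the
  weak-* (Gelfand) topology. The Gelfand transform of f is (\<lambda>h. h f).\<close>

definition max_ideal_space :: "(complex \<Rightarrow> 'a::{comm_ring_1,real_normed_algebra_1,banach}) \<Rightarrow> ('a \<Rightarrow> complex) set" where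
  "max_ideal_space \<iota> = {h. clinear_functional \<iota> h \<and> (\<forall>x y. h (x * y) = h x * h y) \<and> h \<noteq> (\<lambda>_. 0)}"

definition semisimple :: "(complex \<Rightarrow> 'a::{comm_ring_1,real_normed_algebra_1,banach}) \<Rightarrow> bool" where
  "semisimple \<iota> \<longleftrightarrow> (\<forall>f. (\<forall>h\<in>max_ideal_space \<iota>. h f = 0) \<longrightarrow> f = 0)"

definition unital_endomorphism :: "(complex \<Rightarrow> 'a::{comm_ring_1,real_normed_algebra_1,banach}) \<Rightarrow> ('a \<Rightarrow> 'a) \<Rightarrow> bool" where
  "unital_endomorphism \<iota> T \<longleftrightarrow> clinear_map \<iota> T \<and> (\<forall>x y. T (x * y) = T x * T y) \<and> T 1 = 1"

definition induced_by :: "(complex \<Rightarrow> 'a::{comm_ring_1,real_normed_algebra_1,banach}) \<Rightarrow> ('a \<Rightarrow> 'a) \<Rightarrow> (('a \<Rightarrow> complex) \<Rightarrow> ('a \<Rightarrow> complex)) \<Rightarrow> bool" where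
  "induced_by \<iota> T \<phi> \<longleftrightarrow>
     \<phi> ` max_ideal_space \<iota> \<subseteq> max_ideal_space \<iota> \<and> continuous_on (max_ideal_space \<iota>) \<phi> \<and>
     (\<forall>f. \<forall>x\<in>max_ideal_space \<iota>. x (T f) = (\<phi> x) f)"

definition point_derivation :: "(complex \<Rightarrow> 'a::{comm_ring_1,real_normed_algebra_1,banach}) \<Rightarrow> ('a \<Rightarrow> complex) \<Rightarrow> ('a \<Rightarrow> complex) \<Rightarrow> bool" where
  "point_derivation \<iota> x0 D \<longleftrightarrow> clinear_functional \<iota> D \<and> (\<forall>f g. D (f * g) = x0 f * D g + x0 g * D f)"

definition compact_operator :: "(complex \<Rightarrow> 'a::{comm_ring_1,real_normed_algebra_1,banach}) \<Rightarrow> ('a \<Rightarrow> 'a) \<Rightarrow> bool" where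
  "compact_operator \<iota> K \<longleftrightarrow> clinear_map \<iota> K \<and> bounded_linear K \<and> compact (closure (K ` ball 0 1))"

definition riesz_operator :: "(complex \<Rightarrow> 'a::{comm_ring_1,real_normed_algebra_1,banach}) \<Rightarrow> ('a \<Rightarrow> 'a) \<Rightarrow> bool" where
  "riesz_operator \<iota> T \<longleftrightarrow> clinear_map \<iota> T \<and> bounded_linear T \<and>
     (\<lambda>n. root n (Inf {onorm (\<lambda>x. (T ^^ n) x - K x) | K. compact_operator \<iota> K})) \<longlonglongrightarrow> 0"

end

theory Submission
  imports Defs
begin

text \<open>The absence of point derivations at \<open>x\<^sub>0\<close> means that every \<open>f\<close> with
  \<open>x\<^sub>0(f) = 0\<close> is a finite sum of products \<open>g h\<close> with \<open>x\<^sub>0(g) = x\<^sub>0(h) = 0\<close>. Hence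
  \<open>|y(f) - x\<^sub>0(f)| \<le> C\<^sub>f \<parallel>y - x\<^sub>0\<parallel>\<^sup>2\<close> for all characters \<open>y\<close>, and the uniform boundedness
  principle makes \<open>C\<^sub>f\<close> uniform, so \<open>\<parallel>y - x\<^sub>0\<parallel> \<le> K \<parallel>y - x\<^sub>0\<parallel>\<^sup>2\<close>: the point \<open>x\<^sub>0\<close> is isolated in
  \<open>X\<close> for the norm of the dual space.

  Since \<open>T\<close> is a Riesz operator, some power \<open>T\<^sup>n\<close> is within \<open>\<delta>\<close> of a compact operator \<open>K\<close>,
  and the image of the unit ball under \<open>K\<close> has a finite \<open>\<delta>\<close>-net \<open>F\<close>. The images
  \<open>\<phi>\<^sub>j(X)\<close> are decreasing compact sets shrinking to \<open>{x\<^sub>0}\<close>, so for large \<open>j\<close> every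
  \<open>z \<in> \<phi>\<^sub>j(X)\<close> is \<open>\<delta>\<close>-close to \<open>x\<^sub>0\<close> on \<open>F\<close>. Then \<open>\<parallel>\<phi>\<^sub>n(z) - x\<^sub>0\<parallel> = \<parallel>(z - x\<^sub>0) \<circ> T\<^sup>n\<parallel> \<le> 5\<delta>\<close>,
  which for small \<open>\<delta>\<close> forces \<open>\<phi>\<^sub>n\<^sub>+\<^sub>j = x\<^sub>0\<close> on \<open>X\<close>; semisimplicity turns this into
  \<open>T\<^sup>n\<^sup>+\<^sup>j f = f(x\<^sub>0) 1\<close>.\<close>

lemma one_minus_mult_suminf_power:
  fixes u :: "'a::{real_normed_algebra_1,banach}"
  assumes "norm u < 1"
  shows "(1 - u) * (\<Sum>n. u ^ n) = 1"
proof -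
  have s: "summable (\<lambda>n. u ^ n)" by (rule complete_algebra_summable_geometric[OF assms])
  have "u * (\<Sum>n. u ^ n) = (\<Sum>n. u ^ Suc n)" using suminf_mult[OF s, of u] by simp
  also have "\<dots> = (\<Sum>n. u ^ n) - 1" using suminf_split_head[OF s] by simp
  finally show ?thesis by (simp add: algebra_simps)
qed

lemma less_of_root_less:
  fixes a \<delta> :: real
  assumes "n \<ge> 1" "0 < \<delta>" "\<delta> \<le> 1" "root n a < \<delta>"
  shows "a < \<delta>"
proof (cases "a \<le> 0")
  case False
  have r1: "root n a \<le> 1" using assms(3,4) by linarith
  have "a = root n a ^ n" using False assms(1) by simp
  also have "\<dots> \<le> root n a ^ 1" using False r1 assms(1) by (intro power_decreasing) auto
  also have "\<dots> < \<delta>" using assms(4) by simp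
  finally show ?thesis .
qed (use assms in simp)

lemma bounded_linear_funpow:
  fixes T :: "'a::real_normed_vector \<Rightarrow> 'a"
  assumes "bounded_linear T"
  shows "bounded_linear (T ^^ n)"
proof (induction n)
  case 0
  then show ?case by (simp add: id_def bounded_linear_ident)
next
  case (Suc n)
  then show ?case using bounded_linear_compose[OF assms Suc] by (simp add: o_def)
qed

lemma onorm_le_of_unit_ball:
  assumes f: "bounded_linear f" and "0 \<le> b" and unit: "\<And>x. norm x \<le> 1 \<Longrightarrow> norm (f x) \<le> b"
  shows "onorm f \<le> b"
proof (rule onorm_bound[OF \<open>0 \<le> b\<close>])
  interpret f: bounded_linear f by (fact f)
  fix x
  show "norm (f x) \<le> b * norm x"
  proof (cases "x = 0")
    case False
    have "norm (f (x /\<^sub>R norm x)) \<le> b" using False by (intro unit) simp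
    then have "inverse (norm x) * norm (f x) \<le> b" by (simp add: f.scaleR)
    then show ?thesis using False by (simp add: field_simps)
  qed (simp add: f.zero)
qed

lemma onorm_compose_le_of_net:
  fixes L :: "'b::real_normed_vector \<Rightarrow> 'c::real_normed_vector"
    and S K :: "'a::real_normed_vector \<Rightarrow> 'b"
  assumes L: "bounded_linear L" and S: "bounded_linear S" and K: "bounded_linear K"
    and LM: "onorm L \<le> M"
    and SK: "onorm (\<lambda>x. S x - K x) \<le> \<delta>"
    and net: "K ` cball 0 1 \<subseteq> (\<Union>h\<in>F. ball h \<delta>)"
    and small: "\<And>h. h \<in> F \<Longrightarrow> norm (L h) \<le> \<delta>"
  shows "onorm (L \<circ> S) \<le> (1 + 2 * M) * \<delta>"
proof (rule onorm_le_of_unit_ball)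
  interpret L: bounded_linear L by (fact L)
  have SK_bl: "bounded_linear (\<lambda>x. S x - K x)" using S K by (rule bounded_linear_sub)
  have \<delta>0: "0 \<le> \<delta>" using onorm_pos_le[OF SK_bl] SK by linarith
  have M0: "0 \<le> M" using onorm_pos_le[OF L] LM by linarith
  show "bounded_linear (L \<circ> S)" unfolding o_def using L S by (rule bounded_linear_compose)
  show "0 \<le> (1 + 2 * M) * \<delta>" using \<delta>0 M0 by simp
  fix x :: 'a
  assume x1: "norm x \<le> 1"
  then obtain h where h: "h \<in> F" "dist h (K x) < \<delta>" using net by fastforce
  have decomp: "L (S x) = L h + L (K x - h) + L (S x - K x)" by (simp add: L.add[symmetric])
  have "norm (L (K x - h)) \<le> M * \<delta>"
  proof -
    have "norm (L (K x - h)) \<le> onorm L * norm (K x - h)" by (rule onorm[OF L])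
    also have "\<dots> \<le> M * \<delta>"
      using h(2) LM M0 by (intro mult_mono) (auto simp: dist_norm norm_minus_commute)
    finally show ?thesis .
  qed
  moreover have "norm (L (S x - K x)) \<le> M * \<delta>"
  proof -
    have SKx: "norm (S x - K x) \<le> \<delta> * norm x"
      using onorm[OF SK_bl, of x] mult_right_mono[OF SK norm_ge_zero[of x]] by linarith
    have "norm (L (S x - K x)) \<le> onorm L * norm (S x - K x)" by (rule onorm[OF L])
    also have "\<dots> \<le> M * (\<delta> * norm x)" using LM SKx M0 by (intro mult_mono) auto
    also have "\<dots> \<le> M * \<delta>" using x1 \<delta>0 M0 by (intro mult_left_mono mult_left_le) auto
    finally show ?thesis .
  qed
  moreover have "norm (L (S x)) \<le> norm (L h) + norm (L (K x - h)) + norm (L (S x - K x))"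
    unfolding decomp by (rule order_trans[OF norm_triangle_ineq add_right_mono[OF norm_triangle_ineq]])
  ultimately have "norm (L (S x)) \<le> \<delta> + M * \<delta> + M * \<delta>" using small[OF h(1)] by linarith
  then show "norm ((L \<circ> S) x) \<le> (1 + 2 * M) * \<delta>" by (simp add: algebra_simps)
qed

lemma compact_imp_closed_fun:
  fixes S :: "('a \<Rightarrow> 'b::metric_space) set"
  assumes "compact S"
  shows "closed S"
proof -
  have "Hausdorff_space (product_topology (\<lambda>_::'a. euclidean :: 'b topology) UNIV)"
    by (simp add: Hausdorff_space_product_topology)
  then have "Hausdorff_space (euclidean :: ('a \<Rightarrow> 'b) topology)"
    by (simp only: euclidean_product_topology)
  moreover have "compactin euclidean S" using assms by simp
  ultimately have "closedin euclidean S" by (rule compactin_imp_closedin)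
  then show ?thesis using closed_closedin by blast
qed

lemma compact_decseq_subset_open:
  fixes C :: "nat \<Rightarrow> 'a::topological_space set"
  assumes "compact (C 0)" "\<And>n. closed (C n)" "decseq C" "open U" "(\<Inter>n. C n) \<subseteq> U"
  shows "\<exists>n. C n \<subseteq> U"
proof -
  have cover: "C 0 \<subseteq> (\<Union>n. U \<union> - C n)" using assms(5) by blast
  have "open (U \<union> - C n)" for n using assms(2,4) by (simp add: open_Un open_Compl)
  then obtain M where M: "M \<subseteq> UNIV" "finite M" "C 0 \<subseteq> (\<Union>n\<in>M. U \<union> - C n)"
    by (rule compactE_image[OF assms(1), of UNIV "\<lambda>n. U \<union> - C n"]) (use cover in auto)
  define m where "m = Max (insert 0 M)"
  have "C m \<subseteq> U"
  proof
    fix x assume x: "x \<in> C m"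
    then have "x \<in> C 0" using decseqD[OF assms(3), of 0 m] by blast
    then obtain n where "n \<in> M" "x \<in> U \<union> - C n" using M(3) by blast
    moreover have "C m \<subseteq> C n"
      using M(2) \<open>n \<in> M\<close> by (intro decseqD[OF assms(3)]) (simp add: m_def)
    ultimately show "x \<in> U" using x by blast
  qed
  then show ?thesis ..
qed

section \<open>Uniform boundedness principle\<close>

lemma closed_cover_contains_ball:
  fixes G :: "nat \<Rightarrow> 'a::complete_space set"
  assumes closed: "\<And>n. closed (G n)" and cover: "(\<Union>n. G n) = UNIV"
  obtains n a r where "r > 0" "ball a r \<subseteq> G n"
proof -
  have "\<exists>n. euclidean interior_of G n \<noteq> {}"
  proof (rule ccontr)
    assume "\<nexists>n. euclidean interior_of G n \<noteq> {}"
    then have "euclidean interior_of \<Union>(range G) = {}"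
      by (intro Baire_category_alt)
        (auto simp: completely_metrizable_space_euclidean closed_closedin[symmetric] closed)
    then show False using cover by simp
  qed
  then obtain n a where "a \<in> interior (G n)" by (auto simp: interior_of_def interior_def)
  then show ?thesis using that by (meson mem_interior)
qed

lemma linear_bound_of_ball:
  fixes F :: "'a::real_normed_vector \<Rightarrow> 'b::real_normed_vector"
  assumes "linear F" "r > 0" and bound: "\<And>z. z \<in> ball a r \<Longrightarrow> norm (F z) \<le> M"
  shows "norm (F x) \<le> 4 * M / r * norm x"
proof (cases "x = 0")
  case True
  then show ?thesis using linear_0[OF assms(1)] by simp
next
  case False
  define c where "c = r / (2 * norm x)"
  have c0: "c > 0" using False assms(2) by (simp add: c_def)
  have "dist a (a + c *\<^sub>R x) = r / 2" using False assms(2) by (simp add: c_def dist_norm)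
  then have "norm (F (a + c *\<^sub>R x)) \<le> M" "norm (F a) \<le> M"
    using assms(2) by (auto intro!: bound)
  then have "norm (F (a + c *\<^sub>R x) - F a) \<le> 2 * M" by (smt (verit) norm_triangle_ineq4)
  moreover have "F (a + c *\<^sub>R x) - F a = c *\<^sub>R F x"
    using linear_add[OF assms(1)] linear_scale[OF assms(1)] by simp
  ultimately have "c * norm (F x) \<le> 2 * M" using c0 by simp
  then show ?thesis using c0 False assms(2) by (simp add: c_def field_simps abs_of_pos)
qed

lemma uniform_boundedness:
  fixes F :: "'i \<Rightarrow> 'a::banach \<Rightarrow> 'b::real_normed_vector"
  assumes bl: "\<And>i. i \<in> I \<Longrightarrow> bounded_linear (F i)"
    and pointwise: "\<And>x. \<exists>C. \<forall>i\<in>I. norm (F i x) \<le> C"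
  shows "\<exists>K. \<forall>i\<in>I. \<forall>x. norm (F i x) \<le> K * norm x"
proof -
  define G where "G n = (\<Inter>i\<in>I. {x. norm (F i x) \<le> real n})" for n :: nat
  have "closed {x. norm (F i x) \<le> real n}" if "i \<in> I" for i n
    using bl[OF that] by (intro closed_Collect_le continuous_on_norm continuous_on_const linear_continuous_on) auto
  then have "closed (G n)" for n unfolding G_def by blast
  moreover have "(\<Union>n. G n) = UNIV"
  proof safe
    fix x :: 'a
    obtain C where "\<forall>i\<in>I. norm (F i x) \<le> C" using pointwise by blast
    moreover obtain n :: nat where "C \<le> real n" using real_arch_simple by blast
    ultimately have "x \<in> G n" unfolding G_def by force
    then show "x \<in> (\<Union>n. G n)" by blast
  qed simp
  ultimately obtain n a r where "r > 0" "ball a r \<subseteq> G n" by (rule closed_cover_contains_ball)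
  then have "norm (F i x) \<le> 4 * real n / r * norm x" if "i \<in> I" for i x
    using bl[OF that] that
    by (intro linear_bound_of_ball) (auto simp: G_def bounded_linear.linear)
  then show ?thesis by blast
qed

section \<open>Characters\<close>

definition dual_dist :: "('b::real_normed_vector \<Rightarrow> complex) \<Rightarrow> ('b \<Rightarrow> complex) \<Rightarrow> real" where
  "dual_dist y z = onorm (\<lambda>g. y g - z g)"

context
  fixes \<iota> :: "complex \<Rightarrow> 'a::{comm_ring_1,real_normed_algebra_1,banach}"
  assumes cba: "cplx_banach_alg \<iota>"
begin

lemma iota_add: "\<iota> (c + d) = \<iota> c + \<iota> d"
  and iota_mult: "\<iota> (c * d) = \<iota> c * \<iota> d"
  and iota_one: "\<iota> 1 = 1"
  and iota_of_real: "\<iota> (complex_of_real r) = of_real r"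
  and norm_iota_mult: "norm (\<iota> c * x) = cmod c * norm x"
  using cba by (simp_all add: cplx_banach_alg_def)

lemma iota_zero: "\<iota> 0 = 0"
  using iota_add[of 0 0] by simp

context
  fixes y :: "'a \<Rightarrow> complex"
  assumes y: "y \<in> max_ideal_space \<iota>"
begin

lemma character_add: "y (a + b) = y a + y b"
  and character_scale: "y (\<iota> c * a) = c * y a"
  and character_mult: "y (a * b) = y a * y b"
  using y unfolding max_ideal_space_def clinear_functional_def by blast+

lemma character_diff: "y (a - b) = y a - y b"
  using character_add[of "a - b" b] by simp

lemma character_one: "y 1 = 1"
proof -
  obtain x where "y x \<noteq> 0" using y by (auto simp: max_ideal_space_def fun_eq_iff)
  moreover have "y x = y x * y 1" using character_mult[of x 1] by simp
  ultimately show ?thesis by simp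
qed

lemma character_iota: "y (\<iota> c) = c"
  using character_scale[of c 1] character_one by simp

lemma character_zero: "y 0 = 0"
  using character_iota[of 0] iota_zero by simp

lemma character_scaleR: "y (r *\<^sub>R a) = r *\<^sub>R y a"
  using character_scale[of "complex_of_real r" a] by (simp add: iota_of_real scaleR_conv_of_real)

text \<open>If \<open>|y(f)| > \<parallel>f\<parallel>\<close>, then \<open>u = f / y(f)\<close> has norm \<open>< 1\<close>, so \<open>1 - u\<close> is invertible,
  contradicting \<open>y(1 - u) = 0\<close>.\<close>

lemma character_norm_le: "cmod (y f) \<le> norm f"
proof (rule ccontr)
  assume "\<not> cmod (y f) \<le> norm f"
  then have lt: "norm f < cmod (y f)" and ne: "y f \<noteq> 0" by auto
  define u where "u = \<iota> (1 / y f) * f"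
  have "norm u < 1" using lt by (simp add: u_def norm_iota_mult norm_divide divide_less_eq)
  moreover have "y u = 1" using ne by (simp add: u_def character_scale)
  ultimately have "y ((1 - u) * (\<Sum>n. u ^ n)) = 0"
    by (simp add: character_mult character_diff character_one)
  then show False using one_minus_mult_suminf_power[OF \<open>norm u < 1\<close>] character_one by simp
qed

lemma bounded_linear_character: "bounded_linear y"
  by (rule bounded_linear_intro[of _ 1]) (auto simp: character_add character_scaleR character_norm_le)

end

lemma compact_max_ideal_space: "compact (max_ideal_space \<iota>)"
proof -
  define P :: "('a \<Rightarrow> complex) set" where "P = PiE UNIV (\<lambda>f. cball 0 (norm f))"
  define Cl :: "('a \<Rightarrow> complex) set" where "Cl = {h. (\<forall>x y. h (x + y) = h x + h y) \<and>
      (\<forall>c x. h (\<iota> c * x) = c * h x) \<and> (\<forall>x y. h (x * y) = h x * h y) \<and> h 1 = 1}"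
  have "compactin (product_topology (\<lambda>_. euclidean) UNIV) P"
    unfolding P_def compactin_PiE by (intro disjI2 ballI) (simp only: compactin_euclidean_iff compact_cball)
  then have "compact P" by (metis euclidean_product_topology compactin_euclidean_iff)
  moreover have "closed Cl"
    unfolding Cl_def
    by (intro closed_Collect_conj closed_Collect_all closed_Collect_eq continuous_intros) simp_all
  moreover have "max_ideal_space \<iota> = P \<inter> Cl"
  proof (intro equalityI subsetI)
    fix y assume y: "y \<in> max_ideal_space \<iota>"
    show "y \<in> P \<inter> Cl"
      using character_add[OF y] character_scale[OF y] character_mult[OF y] character_one[OF y]
        character_norm_le[OF y] by (simp add: P_def Cl_def PiE_iff)
  next
    fix y assume "y \<in> P \<inter> Cl"
    moreover have "(\<lambda>_. 0) \<notin> Cl" by (simp add: Cl_def)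
    ultimately show "y \<in> max_ideal_space \<iota>"
      by (auto simp: Cl_def max_ideal_space_def clinear_functional_def)
  qed
  ultimately show ?thesis by (simp add: compact_Int_closed)
qed

lemma bounded_linear_character_diff:
  "y \<in> max_ideal_space \<iota> \<Longrightarrow> z \<in> max_ideal_space \<iota> \<Longrightarrow> bounded_linear (\<lambda>g. y g - z g)"
  by (intro bounded_linear_sub bounded_linear_character)

lemma dual_dist_le_2:
  assumes "y \<in> max_ideal_space \<iota>" "z \<in> max_ideal_space \<iota>"
  shows "dual_dist y z \<le> 2"
  unfolding dual_dist_def
proof (rule onorm_bound)
  fix g
  have "cmod (y g - z g) \<le> cmod (y g) + cmod (z g)" by (rule norm_triangle_ineq4)
  also have "\<dots> \<le> 2 * norm g" using character_norm_le[OF assms(1)] character_norm_le[OF assms(2)]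
    by (smt (verit))
  finally show "norm (y g - z g) \<le> 2 * norm g" by simp
qed simp

lemma dual_dist_eq_0_iff:
  assumes "y \<in> max_ideal_space \<iota>" "z \<in> max_ideal_space \<iota>"
  shows "dual_dist y z = 0 \<longleftrightarrow> y = z"
  using onorm_eq_0[OF bounded_linear_character_diff[OF assms]] by (auto simp: dual_dist_def fun_eq_iff)

lemma character_norm_le_dual_dist:
  assumes "y \<in> max_ideal_space \<iota>" "z \<in> max_ideal_space \<iota>" "z g = 0"
  shows "cmod (y g) \<le> dual_dist y z * norm g"
  using onorm[OF bounded_linear_character_diff[OF assms(1,2)], of g] assms(3)
  by (simp add: dual_dist_def)

end

section \<open>Isolation of a character without point derivations\<close>

definition kernel_products :: "('a::times \<Rightarrow> complex) \<Rightarrow> 'a set" where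
  "kernel_products x0 = {g * h | g h. x0 g = 0 \<and> x0 h = 0}"

context
  fixes \<iota> :: "complex \<Rightarrow> 'a::{comm_ring_1,real_normed_algebra_1,banach}"
    and x0 :: "'a \<Rightarrow> complex"
  assumes cba: "cplx_banach_alg \<iota>" and x0: "x0 \<in> max_ideal_space \<iota>"
begin

interpretation V: vector_space "\<lambda>c (x::'a). \<iota> c * x"
  by unfold_locales (simp_all add: iota_add[OF cba] iota_mult[OF cba] iota_one[OF cba] algebra_simps)

interpretation C: vector_space "(*) :: complex \<Rightarrow> complex \<Rightarrow> complex"
  by unfold_locales (simp_all add: algebra_simps)

interpretation VC: vector_space_pair "\<lambda>c (x::'a). \<iota> c * x" "(*) :: complex \<Rightarrow> complex \<Rightarrow> complex" ..

lemma point_derivation_of_functional_vanishing_on_products: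
  assumes l: "Vector_Spaces.linear (\<lambda>c x. \<iota> c * x) (*) l"
    and l0: "\<And>p. p \<in> kernel_products x0 \<Longrightarrow> l p = 0"
  shows "point_derivation \<iota> x0 (\<lambda>g. l (g - \<iota> (x0 g)))"
  unfolding point_derivation_def clinear_functional_def
proof (intro conjI allI)
  note ladd = VC.linear_add[OF l] and lscale = VC.linear_scale[OF l]
  fix g h :: 'a and c :: complex
  have "g + h - \<iota> (x0 (g + h)) = (g - \<iota> (x0 g)) + (h - \<iota> (x0 h))"
    by (simp add: character_add[OF cba x0] iota_add[OF cba])
  then show "l (g + h - \<iota> (x0 (g + h))) = l (g - \<iota> (x0 g)) + l (h - \<iota> (x0 h))"
    by (simp only: ladd)
  have "\<iota> c * g - \<iota> (x0 (\<iota> c * g)) = \<iota> c * (g - \<iota> (x0 g))"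
    by (simp add: character_scale[OF cba x0] iota_mult[OF cba] right_diff_distrib)
  then show "l (\<iota> c * g - \<iota> (x0 (\<iota> c * g))) = c * l (g - \<iota> (x0 g))"
    by (simp only: lscale)
  define m n where "m = g - \<iota> (x0 g)" and "n = h - \<iota> (x0 h)"
  have "x0 m = 0" "x0 n = 0"
    by (simp_all add: m_def n_def character_diff[OF cba x0] character_iota[OF cba x0])
  then have "m * n \<in> kernel_products x0" unfolding kernel_products_def by blast
  moreover have "g * h - \<iota> (x0 (g * h)) = \<iota> (x0 g) * n + \<iota> (x0 h) * m + m * n"
    by (simp add: m_def n_def character_mult[OF cba x0] iota_mult[OF cba] algebra_simps)
  ultimately show "l (g * h - \<iota> (x0 (g * h))) = x0 g * l n + x0 h * l m"
    using l0 by (simp add: ladd lscale)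
qed

text \<open>A linear functional separating \<open>f\<close> from the span would give a nonzero point
  derivation.\<close>

lemma kernel_subset_span_kernel_products:
  assumes noder: "\<forall>D. point_derivation \<iota> x0 D \<longrightarrow> D = (\<lambda>_. 0)" and f: "x0 f = 0"
  shows "f \<in> V.span (kernel_products x0)"
proof (rule ccontr)
  assume nf: "f \<notin> V.span (kernel_products x0)"
  obtain B where B: "B \<subseteq> V.span (kernel_products x0)" "V.independent B"
      "V.span (kernel_products x0) \<subseteq> V.span B"
    by (rule V.maximal_independent_subset)
  have "f \<notin> V.span B" using nf B(1) V.span_minimal[OF B(1) V.subspace_span] by blast
  then have ind: "V.independent (insert f B)" using B(2) by (rule V.independent_insertI)
  obtain l where l: "Vector_Spaces.linear (\<lambda>c x. \<iota> c * x) (*) l"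
      and lB: "\<forall>x\<in>insert f B. l x = (if x = f then 1 else 0)"
    using VC.linear_independent_extend[OF ind, of "\<lambda>x. if x = f then 1 else 0"] by blast
  have "l p = 0" if "p \<in> kernel_products x0" for p
  proof (rule VC.linear_eq_0_on_span[OF l])
    show "p \<in> V.span B" using that B(3) V.span_base by blast
    show "l b = 0" if "b \<in> B" for b
      using that lB \<open>f \<notin> V.span B\<close> V.span_base by fastforce
  qed
  then have "point_derivation \<iota> x0 (\<lambda>g. l (g - \<iota> (x0 g)))"
    by (rule point_derivation_of_functional_vanishing_on_products[OF l])
  then have "l (f - \<iota> (x0 f)) = 0" using noder by (metis (mono_tags))
  moreover have "l (f - \<iota> (x0 f)) = 1" using f lB by (simp add: iota_zero[OF cba])
  ultimately show False by simp
qed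

lemma span_kernel_products_quadratic_bound:
  assumes "f \<in> V.span (kernel_products x0)"
  shows "\<exists>C. \<forall>y\<in>max_ideal_space \<iota>. cmod (y f) \<le> C * (dual_dist y x0)\<^sup>2"
  using assms
proof (induction rule: V.span_induct_alt)
  case base
  show ?case by (intro exI[of _ 0] ballI) (simp add: character_zero[OF cba])
next
  case (step c p w)
  obtain C where C: "\<forall>y\<in>max_ideal_space \<iota>. cmod (y w) \<le> C * (dual_dist y x0)\<^sup>2"
    using step.IH by blast
  obtain g h where gh: "p = g * h" "x0 g = 0" "x0 h = 0"
    using step.hyps by (auto simp: kernel_products_def)
  show ?case
  proof (intro exI[of _ "cmod c * norm g * norm h + C"] ballI)
    fix y assume y: "y \<in> max_ideal_space \<iota>"
    define e where "e = dual_dist y x0"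
    have e0: "0 \<le> e"
      unfolding e_def dual_dist_def by (intro onorm_pos_le bounded_linear_character_diff[OF cba y x0])
    have yg: "cmod (y g) \<le> e * norm g" and yh: "cmod (y h) \<le> e * norm h"
      using character_norm_le_dual_dist[OF cba y x0] gh(2,3) by (simp_all add: e_def)
    have "cmod (y (\<iota> c * p + w)) = cmod (c * (y g * y h) + y w)"
      by (simp add: gh(1) character_add[OF cba y] character_mult[OF cba y] character_iota[OF cba y])
    also have "\<dots> \<le> cmod c * (cmod (y g) * cmod (y h)) + cmod (y w)"
      by (metis norm_mult norm_triangle_ineq)
    also have "\<dots> \<le> cmod c * ((e * norm g) * (e * norm h)) + C * e\<^sup>2"
      using C y yg yh e0 by (intro add_mono mult_left_mono mult_mono) (auto simp: e_def)
    also have "\<dots> = (cmod c * norm g * norm h + C) * e\<^sup>2"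
      by (simp add: power2_eq_square algebra_simps)
    finally show "cmod (y (\<iota> c * p + w)) \<le> (cmod c * norm g * norm h + C) * (dual_dist y x0)\<^sup>2"
      by (simp add: e_def)
  qed
qed

lemma dual_dist_isolated:
  assumes noder: "\<forall>D. point_derivation \<iota> x0 D \<longrightarrow> D = (\<lambda>_. 0)"
  shows "\<exists>r>0. \<forall>y\<in>max_ideal_space \<iota>. dual_dist y x0 < r \<longrightarrow> y = x0"
proof -
  define I where "I = {y \<in> max_ideal_space \<iota>. dual_dist y x0 \<noteq> 0}"
  define F where "F y f = (1 / (dual_dist y x0)\<^sup>2) *\<^sub>R (y f - x0 f)" for y f
  have "\<exists>K. \<forall>y\<in>I. \<forall>f. norm (F y f) \<le> K * norm f"
  proof (rule uniform_boundedness)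
    fix y assume "y \<in> I"
    then show "bounded_linear (F y)"
      unfolding F_def I_def using bounded_linear_character_diff[OF cba _ x0]
      by (auto intro: bounded_linear_const_scaleR)
  next
    fix f
    have "x0 (f - \<iota> (x0 f)) = 0" by (simp add: character_diff[OF cba x0] character_iota[OF cba x0])
    then obtain C where C: "\<forall>y\<in>max_ideal_space \<iota>. cmod (y (f - \<iota> (x0 f))) \<le> C * (dual_dist y x0)\<^sup>2"
      using span_kernel_products_quadratic_bound kernel_subset_span_kernel_products[OF noder] by blast
    have "norm (F y f) \<le> C" if "y \<in> I" for y
    proof -
      have y: "y \<in> max_ideal_space \<iota>" and e: "dual_dist y x0 \<noteq> 0" using that by (auto simp: I_def)
      have "norm (F y f) = cmod (y (f - \<iota> (x0 f))) / (dual_dist y x0)\<^sup>2"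
        by (simp add: F_def character_diff[OF cba y] character_iota[OF cba y])
      also have "\<dots> \<le> C" using C y e by (simp add: pos_divide_le_eq)
      finally show ?thesis .
    qed
    then show "\<exists>C. \<forall>y\<in>I. norm (F y f) \<le> C" by blast
  qed
  then obtain K where K: "\<And>y f. y \<in> I \<Longrightarrow> norm (F y f) \<le> K * norm f" by blast
  have inv: "1 \<le> K * dual_dist y x0" if "y \<in> I" for y
  proof -
    define e where "e = dual_dist y x0"
    have y: "y \<in> max_ideal_space \<iota>" and "e \<noteq> 0" using that by (auto simp: I_def e_def)
    then have e: "e > 0"
      using onorm_pos_le[OF bounded_linear_character_diff[OF cba y x0]] by (simp add: e_def dual_dist_def)
    have "onorm (\<lambda>g. y g - x0 g) \<le> K * e\<^sup>2"
    proof (rule onorm_le)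
      fix g
      have "norm (y g - x0 g) = e\<^sup>2 * norm (F y g)" using e by (simp add: F_def e_def)
      also have "\<dots> \<le> e\<^sup>2 * (K * norm g)" using K[OF that] by (intro mult_left_mono) auto
      finally show "norm (y g - x0 g) \<le> K * e\<^sup>2 * norm g" by (simp add: mult_ac)
    qed
    then have "e \<le> K * e\<^sup>2" by (simp add: e_def dual_dist_def)
    then show ?thesis using e by (simp add: power2_eq_square e_def)
  qed
  show ?thesis
  proof (intro exI[of _ "1 / max K 1"] conjI ballI impI)
    fix y assume y: "y \<in> max_ideal_space \<iota>" and small: "dual_dist y x0 < 1 / max K 1"
    show "y = x0"
    proof (rule ccontr)
      assume "y \<noteq> x0"
      then have "y \<in> I" using y dual_dist_eq_0_iff[OF cba y x0] by (simp add: I_def)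
      have "0 \<le> dual_dist y x0"
        unfolding dual_dist_def by (rule onorm_pos_le[OF bounded_linear_character_diff[OF cba y x0]])
      then have "K * dual_dist y x0 \<le> max K 1 * dual_dist y x0" by (simp add: mult_right_mono)
      moreover have "max K 1 * dual_dist y x0 < 1" using small by (simp add: less_divide_eq mult.commute max_def)
      ultimately show False using inv[OF \<open>y \<in> I\<close>] by linarith
    qed
  qed simp
qed

end

section \<open>Riesz operators and the dynamics of the induced map\<close>

lemma compact_operator_zero: "compact_operator \<iota> (\<lambda>_. 0)"
proof -
  have "(\<lambda>_::'a. 0::'a) ` ball 0 1 = {0}" by (rule image_constant[of 0]) simp
  then show ?thesis by (simp add: compact_operator_def clinear_map_def bounded_linear_zero)
qed

lemma riesz_operator_approx:
  assumes riesz: "riesz_operator \<iota> T" and "\<delta> > 0"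
  shows "\<exists>n\<ge>1. \<exists>K. compact_operator \<iota> K \<and> onorm (\<lambda>x. (T ^^ n) x - K x) < \<delta>"
proof -
  define S where "S n = {onorm (\<lambda>x. (T ^^ n) x - K x) | K. compact_operator \<iota> K}" for n
  have "(\<lambda>n. root n (Inf (S n))) \<longlonglongrightarrow> 0"
    using riesz by (simp add: riesz_operator_def S_def)
  then have "\<forall>\<^sub>F n in sequentially. root n (Inf (S n)) < min \<delta> 1"
    by (rule order_tendstoD(2)) (simp add: \<open>\<delta> > 0\<close>)
  then obtain N0 where N0: "\<And>n. n \<ge> N0 \<Longrightarrow> root n (Inf (S n)) < min \<delta> 1"
    unfolding eventually_sequentially by blast
  define n where "n = max N0 1"
  have n: "n \<ge> 1" "root n (Inf (S n)) < min \<delta> 1" using N0[of n] by (simp_all add: n_def)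
  have "Inf (S n) < min \<delta> 1" by (rule less_of_root_less[OF n(1) _ _ n(2)]) (simp_all add: \<open>\<delta> > 0\<close>)
  moreover have "S n \<noteq> {}" using compact_operator_zero by (auto simp: S_def)
  ultimately obtain s where "s \<in> S n" "s < \<delta>" using cInf_lessD[of "S n"] by force
  then show ?thesis using n(1) by (auto simp: S_def)
qed

lemma compact_operator_finite_net:
  assumes "compact_operator \<iota> K" "\<delta> > 0"
  shows "\<exists>F. finite F \<and> K ` cball 0 1 \<subseteq> (\<Union>h\<in>F. ball h \<delta>)"
proof -
  define C where "C = closure (K ` ball 0 1)"
  have "compact C" and K: "bounded_linear K" using assms(1) by (simp_all add: compact_operator_def C_def)
  then obtain F where F: "finite F" "C \<subseteq> (\<Union>h\<in>F. ball h \<delta>)"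
    using seq_compact_imp_totally_bounded[OF compact_imp_seq_compact[OF \<open>compact C\<close>]] assms(2)
    by auto
  have "K ` closure (ball 0 1) \<subseteq> C"
    by (rule image_closure_subset[OF linear_continuous_on[OF K]]) (simp_all add: C_def closure_subset)
  then have "K ` cball 0 1 \<subseteq> (\<Union>h\<in>F. ball h \<delta>)" using F(2) by simp
  then show ?thesis using F(1) by blast
qed

context
  fixes \<iota> :: "complex \<Rightarrow> 'a::{comm_ring_1,real_normed_algebra_1,banach}"
    and T :: "'a \<Rightarrow> 'a"
    and \<phi> :: "('a \<Rightarrow> complex) \<Rightarrow> ('a \<Rightarrow> complex)"
    and x0 :: "'a \<Rightarrow> complex"
  assumes cba: "cplx_banach_alg \<iota>"
    and induced: "induced_by \<iota> T \<phi>"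
    and limit: "(\<Inter>n. (\<phi> ^^ n) ` max_ideal_space \<iota>) = {x0}"
begin

lemma funpow_induced_in_max_ideal_space:
  "x \<in> max_ideal_space \<iota> \<Longrightarrow> (\<phi> ^^ j) x \<in> max_ideal_space \<iota>"
  using induced by (induction j) (auto simp: induced_by_def)

lemma character_funpow:
  "x \<in> max_ideal_space \<iota> \<Longrightarrow> x ((T ^^ j) f) = (\<phi> ^^ j) x f"
proof (induction j arbitrary: f)
  case (Suc j)
  have "x ((T ^^ Suc j) f) = (\<phi> ^^ j) x (T f)"
    using Suc.IH[OF Suc.prems, of "T f"] by (simp only: funpow_Suc_right o_apply)
  also have "\<dots> = \<phi> ((\<phi> ^^ j) x) f"
    using induced funpow_induced_in_max_ideal_space[OF Suc.prems] by (simp add: induced_by_def)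
  finally show ?case by simp
qed simp

lemma continuous_on_funpow_induced: "continuous_on (max_ideal_space \<iota>) (\<phi> ^^ j)"
proof (induction j)
  case (Suc j)
  have "continuous_on ((\<phi> ^^ j) ` max_ideal_space \<iota>) \<phi>"
    using induced funpow_induced_in_max_ideal_space
    by (auto simp: induced_by_def intro: continuous_on_subset)
  then show ?case using continuous_on_compose[OF Suc] by simp
qed (simp add: continuous_on_id)

lemma limit_in_max_ideal_space: "x0 \<in> max_ideal_space \<iota>"
proof -
  have "x0 \<in> (\<phi> ^^ 0) ` max_ideal_space \<iota>" using limit by blast
  then show ?thesis by simp
qed

lemma decseq_funpow_induced_image: "decseq (\<lambda>j. (\<phi> ^^ j) ` max_ideal_space \<iota>)"
proof (rule decseq_SucI)
  fix j
  have "(\<phi> ^^ Suc j) x = (\<phi> ^^ j) (\<phi> x)" for x by (simp add: funpow_swap1)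
  then show "(\<phi> ^^ Suc j) ` max_ideal_space \<iota> \<subseteq> (\<phi> ^^ j) ` max_ideal_space \<iota>"
    using induced by (auto simp: induced_by_def)
qed

lemma funpow_induced_limit: "(\<phi> ^^ j) x0 = x0"
proof -
  have "\<phi> x0 \<in> (\<phi> ^^ k) ` max_ideal_space \<iota>" for k
  proof -
    obtain z where z: "z \<in> max_ideal_space \<iota>" "x0 = (\<phi> ^^ k) z" using limit by blast
    then have "\<phi> x0 = (\<phi> ^^ k) (\<phi> z)" by (simp add: funpow_swap1)
    moreover have "\<phi> z \<in> max_ideal_space \<iota>" using induced z(1) by (auto simp: induced_by_def)
    ultimately show ?thesis by blast
  qed
  then have "\<phi> x0 = x0" using limit by blast
  then show ?thesis by (induction j) simp_all
qed

lemma eventually_funpow_induced_close: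
  assumes "\<eta> > 0"
  shows "\<forall>\<^sub>F j in sequentially. \<forall>x\<in>max_ideal_space \<iota>. cmod ((\<phi> ^^ j) x h - x0 h) < \<eta>"
proof -
  define C where "C j = (\<phi> ^^ j) ` max_ideal_space \<iota>" for j
  have "compact (C j)" for j
    unfolding C_def by (rule compact_continuous_image[OF continuous_on_funpow_induced compact_max_ideal_space[OF cba]])
  moreover have "open {y :: 'a \<Rightarrow> complex. cmod (y h - x0 h) < \<eta>}"
    by (intro open_Collect_less continuous_intros) simp_all
  moreover have "(\<Inter>j. C j) \<subseteq> {y. cmod (y h - x0 h) < \<eta>}" using limit assms by (simp add: C_def)
  moreover have "decseq C" unfolding C_def by (rule decseq_funpow_induced_image)
  ultimately have "\<exists>j0. C j0 \<subseteq> {y. cmod (y h - x0 h) < \<eta>}"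
    by (intro compact_decseq_subset_open compact_imp_closed_fun)
  then obtain j0 where "C j0 \<subseteq> {y. cmod (y h - x0 h) < \<eta>}" by blast
  then have "C j \<subseteq> {y. cmod (y h - x0 h) < \<eta>}" if "j \<ge> j0" for j
    using decseqD[OF decseq_funpow_induced_image that] by (auto simp: C_def)
  then show ?thesis unfolding eventually_sequentially C_def by blast
qed

lemma dual_dist_funpow_induced:
  assumes "z \<in> max_ideal_space \<iota>"
  shows "dual_dist ((\<phi> ^^ n) z) x0 = onorm ((\<lambda>a. z a - x0 a) \<circ> (T ^^ n))"
  using character_funpow[OF assms] character_funpow[OF limit_in_max_ideal_space]
  by (simp add: dual_dist_def o_def funpow_induced_limit)

lemma funpow_induced_collapses:
  assumes riesz: "riesz_operator \<iota> T"
    and noder: "\<forall>D. point_derivation \<iota> x0 D \<longrightarrow> D = (\<lambda>_. 0)"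
  shows "\<exists>N>0. \<forall>x\<in>max_ideal_space \<iota>. (\<phi> ^^ N) x = x0"
proof -
  note x0 = limit_in_max_ideal_space
  obtain r where r: "r > 0" "\<And>y. y \<in> max_ideal_space \<iota> \<Longrightarrow> dual_dist y x0 < r \<Longrightarrow> y = x0"
    using dual_dist_isolated[OF cba x0 noder] by blast
  define \<delta> where "\<delta> = r / 10"
  have \<delta>: "\<delta> > 0" using r(1) by (simp add: \<delta>_def)
  obtain n K where n: "n \<ge> 1" and K: "compact_operator \<iota> K" "onorm (\<lambda>x. (T ^^ n) x - K x) < \<delta>"
    using riesz_operator_approx[OF riesz \<delta>] by blast
  obtain F where F: "finite F" "K ` cball 0 1 \<subseteq> (\<Union>h\<in>F. ball h \<delta>)"
    using compact_operator_finite_net[OF K(1) \<delta>] by blast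
  have "\<forall>\<^sub>F j in sequentially. \<forall>h\<in>F. \<forall>x\<in>max_ideal_space \<iota>. cmod ((\<phi> ^^ j) x h - x0 h) < \<delta>"
    using eventually_funpow_induced_close[OF \<delta>] by (intro eventually_ball_finite[OF F(1)]) blast
  then obtain j where j: "\<And>h x. h \<in> F \<Longrightarrow> x \<in> max_ideal_space \<iota> \<Longrightarrow> cmod ((\<phi> ^^ j) x h - x0 h) < \<delta>"
    unfolding eventually_sequentially by blast
  have "(\<phi> ^^ (n + j)) x = x0" if x: "x \<in> max_ideal_space \<iota>" for x
  proof (rule r(2))
    define z where "z = (\<phi> ^^ j) x"
    have z: "z \<in> max_ideal_space \<iota>" using funpow_induced_in_max_ideal_space[OF x] by (simp add: z_def)
    then show "(\<phi> ^^ (n + j)) x \<in> max_ideal_space \<iota>"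
      by (simp add: z_def funpow_add funpow_induced_in_max_ideal_space)
    have "dual_dist ((\<phi> ^^ (n + j)) x) x0 = onorm ((\<lambda>a. z a - x0 a) \<circ> (T ^^ n))"
      using dual_dist_funpow_induced[OF z] by (simp add: z_def funpow_add)
    also have "\<dots> \<le> (1 + 2 * 2) * \<delta>"
    proof (rule onorm_compose_le_of_net[OF bounded_linear_character_diff[OF cba z x0] _ _ _ _ F(2)])
      have "bounded_linear T" using riesz by (simp add: riesz_operator_def)
      then show "bounded_linear (T ^^ n)" by (rule bounded_linear_funpow)
      show "bounded_linear K" using K(1) by (simp add: compact_operator_def)
      show "onorm (\<lambda>a. z a - x0 a) \<le> 2" using dual_dist_le_2[OF cba z x0] by (simp add: dual_dist_def)
      show "onorm (\<lambda>x. (T ^^ n) x - K x) \<le> \<delta>" using K(2) by simp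
      show "cmod (z h - x0 h) \<le> \<delta>" if "h \<in> F" for h using j[OF that x] by (simp add: z_def)
    qed
    also have "\<dots> < r" using r(1) by (simp add: \<delta>_def)
    finally show "dual_dist ((\<phi> ^^ (n + j)) x) x0 < r" .
  qed
  then show ?thesis using n by (intro exI[of _ "n + j"]) auto
qed

lemma funpow_eq_iota_of_collapse:
  assumes "semisimple \<iota>" and collapse: "\<forall>x\<in>max_ideal_space \<iota>. (\<phi> ^^ N) x = x0"
  shows "(T ^^ N) f = \<iota> (x0 f)"
proof -
  have "h ((T ^^ N) f - \<iota> (x0 f)) = 0" if "h \<in> max_ideal_space \<iota>" for h
    using collapse that by (simp add: character_funpow character_diff[OF cba] character_iota[OF cba])
  then have "(T ^^ N) f - \<iota> (x0 f) = 0" using assms(1) unfolding semisimple_def by blast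
  then show ?thesis by simp
qed

end

theorem corollary1p4:
  fixes \<iota> :: "complex \<Rightarrow> 'a::{comm_ring_1,real_normed_algebra_1,banach}"
    and T :: "'a \<Rightarrow> 'a"
    and \<phi> :: "('a \<Rightarrow> complex) \<Rightarrow> ('a \<Rightarrow> complex)"
    and x0 :: "'a \<Rightarrow> complex"
  assumes "cplx_banach_alg \<iota>"
    and "semisimple \<iota>"
    and "connected (max_ideal_space \<iota>)"
    and "unital_endomorphism \<iota> T"
    and "riesz_operator \<iota> T"
    and "induced_by \<iota> T \<phi>"
    and "(\<Inter>n. (\<phi> ^^ n) ` max_ideal_space \<iota>) = {x0}"
    and "\<forall>D. point_derivation \<iota> x0 D \<longrightarrow> D = (\<lambda>_. 0)"
  shows "\<exists>N>0. \<forall>f. (T ^^ N) f = \<iota> (x0 f)"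
proof -
  obtain N where "N > 0" "\<forall>x\<in>max_ideal_space \<iota>. (\<phi> ^^ N) x = x0"
    using funpow_induced_collapses[OF assms(1,6,7,5,8)] by blast
  then show ?thesis using funpow_eq_iota_of_collapse[OF assms(1,6,7,2)] by blast
qed

end
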